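(* Let $G$ be a twin-free unit square graph, let $\mathcal{P}$ be a clique-stable partition of $V(G)$, and let $f$ be a realization of $G$. Then: (1) For each $X\in\mathcal{P}$ there is $b\in\{-1,1\}$ such that for all $v,w\in X$: $f(v)_1\le f(w)_1 \iff b\,f(v)_2\le b\,f(w)_2$. Call such $b$ the orientation $\mathrm{ori}_{G,f}(X)$ (it is unique if $|X|\ge2$; set $\mathrm{ori}_{G,f}(X)=1$ if $|X|=1$). (2) If $X,Y\in\mathcal{P}$ with $\mathrm{ori}_{G,f}(X)\ne\mathrm{ori}_{G,f}(Y)$, then either $xy\in E(G)$ for all $x\in X,y\in Y$, or $xy\notin E(G)$ for all $x\in X,y\in Y$. (3) Let $X\ne Y\in\mathcal{P}$ with $\mathrm{ori}_{G,f}(X)=\mathrm{ori}_{G,f}(Y)$ and let $k=|\{(x,y)\in X\times Y\mid xy\in E(G)\}|\ge1$. Write $X=\{x_1,\dots,x_s\}$ with $f(x_i)_1\le f(x_{i+1})_1$ for all $i<s$ and $Y=\{y_1,\dots,y_t\}$ with $f(y_j)_1\le f(y_{j+1})_1$ for all $j<t$. Then for all $i\in[s],j\in[t]$: $x_iy_j\in E(G)\iff \lceil it/k\rceil=\lceil js/k\rceil$.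
   Context: A realization of $G$ is $f\colon V(G)\to\mathbb{R}^2$ with $vw\in E(G)$ iff $\|f(v)-f(w)\|_\infty\le1$ for distinct $v,w$; a unit square graph is a graph with a realization. $G$ is twin-free if there are no distinct $v,w$ with $N[v]=N[w]$. $\mathcal{M}(G)$ is the set of maximal cliques. $G^*_{\mathcal{M}}$ is the graph on $V(G)\sqcup\mathcal{M}(G)$ with edge set $E(G)\cup\{vC\mid C\in\mathcal{M}(G),v\in C\}$. A partition $\mathcal{Q}$ of the vertex set of a graph $H$ is stable if for all $X,Y\in\mathcal{Q}$ and $v,w\in X$, $|N_H(v)\cap Y|=|N_H(w)\cap Y|$. A partition $\mathcal{P}$ of $V(G)$ into cliques is clique-stable if, letting $\mathcal{P}^*$ be the coarsest partition of $V(G)\cup\mathcal{M}(G)$ that is stable with respect to $G^*_{\mathcal{M}}$ and refines $\mathcal{P}\cup\{\mathcal{M}(G)\}$, one has $\{Z\in\mathcal{P}^*\mid Z\subseteq V(G)\}=\mathcal{P}$. *)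

theory Defs
  imports Complex_Main "HOL-Library.Disjoint_Sets"
begin

definition fin_graph :: "'v set \<Rightarrow> ('v \<times> 'v) set \<Rightarrow> bool" where
  "fin_graph V E \<longleftrightarrow> finite V \<and> E \<subseteq> V \<times> V \<and> sym E \<and> irrefl E"

definition dist_inf :: "real \<times> real \<Rightarrow> real \<times> real \<Rightarrow> real" where
  "dist_inf p q = max \<bar>fst p - fst q\<bar> \<bar>snd p - snd q\<bar>"

definition realization :: "'v set \<Rightarrow> ('v \<times> 'v) set \<Rightarrow> ('v \<Rightarrow> real \<times> real) \<Rightarrow> bool" where
  "realization V E f \<longleftrightarrow>
     (\<forall>v\<in>V. \<forall>w\<in>V. v \<noteq> w \<longrightarrow> ((v, w) \<in> E \<longleftrightarrow> dist_inf (f v) (f w) \<le> 1))"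

definition unit_square_graph :: "'v set \<Rightarrow> ('v \<times> 'v) set \<Rightarrow> bool" where
  "unit_square_graph V E \<longleftrightarrow> (\<exists>f. realization V E f)"

definition closed_nbhd :: "'v set \<Rightarrow> ('v \<times> 'v) set \<Rightarrow> 'v \<Rightarrow> 'v set" where
  "closed_nbhd V E v = insert v {w \<in> V. (v, w) \<in> E}"

definition twin_free :: "'v set \<Rightarrow> ('v \<times> 'v) set \<Rightarrow> bool" where
  "twin_free V E \<longleftrightarrow> (\<forall>v\<in>V. \<forall>w\<in>V. v \<noteq> w \<longrightarrow> closed_nbhd V E v \<noteq> closed_nbhd V E w)"

definition is_clique :: "'v set \<Rightarrow> ('v \<times> 'v) set \<Rightarrow> 'v set \<Rightarrow> bool" where
  "is_clique V E C \<longleftrightarrow> C \<subseteq> V \<and> (\<forall>v\<in>C. \<forall>w\<in>C. v \<noteq> w \<longrightarrow> (v, w) \<in> E)"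

definition max_cliques :: "'v set \<Rightarrow> ('v \<times> 'v) set \<Rightarrow> 'v set set" where
  "max_cliques V E = {C. is_clique V E C \<and> (\<forall>D. is_clique V E D \<and> C \<subseteq> D \<longrightarrow> D = C)}"

definition star_vertices :: "'v set \<Rightarrow> ('v \<times> 'v) set \<Rightarrow> ('v + 'v set) set" where
  "star_vertices V E = Inl ` V \<union> Inr ` max_cliques V E"

definition star_edges :: "'v set \<Rightarrow> ('v \<times> 'v) set \<Rightarrow> (('v + 'v set) \<times> ('v + 'v set)) set" where
  "star_edges V E =
     {(Inl v, Inl w) | v w. (v, w) \<in> E}
     \<union> {(Inl v, Inr C) | v C. C \<in> max_cliques V E \<and> v \<in> C}
     \<union> {(Inr C, Inl v) | v C. C \<in> max_cliques V E \<and> v \<in> C}"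

definition is_partition :: "'a set set \<Rightarrow> 'a set \<Rightarrow> bool" where
  "is_partition Q S \<longleftrightarrow> (\<forall>X\<in>Q. X \<noteq> {}) \<and> disjoint Q \<and> \<Union>Q = S"

definition refines :: "'a set set \<Rightarrow> 'a set set \<Rightarrow> bool" where
  "refines Q R \<longleftrightarrow> (\<forall>X\<in>Q. \<exists>Y\<in>R. X \<subseteq> Y)"

definition stable_partition :: "'a set \<Rightarrow> ('a \<times> 'a) set \<Rightarrow> 'a set set \<Rightarrow> bool" where
  "stable_partition W F Q \<longleftrightarrow> is_partition Q W \<and>
     (\<forall>X\<in>Q. \<forall>Y\<in>Q. \<forall>v\<in>X. \<forall>w\<in>X.
        card {u \<in> Y. (v, u) \<in> F} = card {u \<in> Y. (w, u) \<in> F})"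

definition coarsest_stable_refinement :: "'a set \<Rightarrow> ('a \<times> 'a) set \<Rightarrow> 'a set set \<Rightarrow> 'a set set \<Rightarrow> bool" where
  "coarsest_stable_refinement W F R Q \<longleftrightarrow>
     stable_partition W F Q \<and> refines Q R \<and>
     (\<forall>Q'. stable_partition W F Q' \<and> refines Q' R \<longrightarrow> refines Q' Q)"

definition clique_stable :: "'v set \<Rightarrow> ('v \<times> 'v) set \<Rightarrow> 'v set set \<Rightarrow> bool" where
  "clique_stable V E P \<longleftrightarrow>
     is_partition P V \<and> (\<forall>X\<in>P. is_clique V E X) \<and>
     (\<forall>Pstar. coarsest_stable_refinement (star_vertices V E) (star_edges V E)
                 ((\<lambda>X. Inl ` X) ` P \<union> {Inr ` max_cliques V E}) Pstar
        \<longrightarrow> {Z \<in> Pstar. Z \<subseteq> Inl ` V} = (\<lambda>X. Inl ` X) ` P)"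

definition oriented :: "('v \<Rightarrow> real \<times> real) \<Rightarrow> 'v set \<Rightarrow> real \<Rightarrow> bool" where
  "oriented f X b \<longleftrightarrow> b \<in> {-1, 1} \<and>
     (\<forall>v\<in>X. \<forall>w\<in>X. fst (f v) \<le> fst (f w) \<longleftrightarrow> b * snd (f v) \<le> b * snd (f w))"

definition ori :: "('v \<Rightarrow> real \<times> real) \<Rightarrow> 'v set \<Rightarrow> real" where
  "ori f X = (if card X = 1 then 1 else (THE b. oriented f X b))"

end

theory Submission
  imports Defs
begin

(*
  Clique-stability makes P equitable: two vertices of a block have equally many neighbours in
  every block.  This needs the coarsest stable refinement to exist, which holds because the join
  of all stable refinements is stable.

  (1) For distinct v, w in a block X, twin-freeness and equitability give a block Z with
  z ~ v, z !~ w and z' ~ w, z' !~ v.  Geometrically the squares of z and z' then lie in opposite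
  corners relative to v and w, so v and w differ in both coordinates and, if v lies up-left of w,
  the neighbourhoods in Z are nested along the coordinatewise order on X; equitability turns
  nested into equal.  An increasing and a decreasing pair in X would thus yield two non-constant
  functions on X, constant on pairs comparable in the increasing resp. decreasing order, which is
  absurd since any two points are comparable in one of these orders.

  (2) Between blocks of opposite orientation there is no induced matching, so neighbourhoods are
  nested, hence equal, hence all or nothing.

  (3) For blocks of equal orientation sorted by the first coordinate, adjacency of x_i and y_j is
  the intersection of two relations of opposite monotonicity, with row degree d = k/|X| and
  column degree e = k/|Y|.  Such a staircase begins with a complete e x d block exhausting its
  rows and columns; peeling it off inductively gives x_i ~ y_j iff ceil(i/e) = ceil(j/d).
*)

section \<open>Coarsest stable refinements\<close>

definition same_block :: "'a set set \<Rightarrow> 'a rel" where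
  "same_block Q = {(x, y). \<exists>X\<in>Q. x \<in> X \<and> y \<in> X}"

lemma is_partition_iff_partition_on: "is_partition Q W \<longleftrightarrow> partition_on W Q"
  unfolding is_partition_def partition_on_def by blast

lemma equiv_same_block: "is_partition Q W \<Longrightarrow> equiv W (same_block Q)"
  unfolding same_block_def is_partition_iff_partition_on by (rule equiv_partition_on)

lemma same_block_mono:
  assumes "refines Q R"
  shows "same_block Q \<subseteq> same_block R"
proof (rule subrelI)
  fix x y assume "(x, y) \<in> same_block Q"
  then obtain X where "X \<in> Q" "x \<in> X" "y \<in> X"
    unfolding same_block_def by blast
  moreover obtain Y where "Y \<in> R" "X \<subseteq> Y"
    using assms \<open>X \<in> Q\<close> unfolding refines_def by blast
  ultimately show "(x, y) \<in> same_block R"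
    unfolding same_block_def by blast
qed

lemma disjoint_common_element_eq:
  assumes "disjoint R" "X \<in> R" "Y \<in> R" "x \<in> X" "x \<in> Y"
  shows "X = Y"
  using disjointD[OF assms(1-3)] assms(4,5) by blast

lemma trans_same_block:
  assumes "disjoint R"
  shows "trans (same_block R)"
proof (rule transI)
  fix x y z assume "(x, y) \<in> same_block R" "(y, z) \<in> same_block R"
  then obtain X Y where "X \<in> R" "Y \<in> R" "x \<in> X" "y \<in> X" "y \<in> Y" "z \<in> Y"
    unfolding same_block_def by blast
  moreover from this have "X = Y"
    using disjoint_common_element_eq[OF assms] by blast
  ultimately show "(x, z) \<in> same_block R"
    unfolding same_block_def by blast
qed

lemma refines_quotient:
  assumes "is_partition Q W" "same_block Q \<subseteq> T"
  shows "refines Q (W // T)"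
  unfolding refines_def
proof
  fix X assume "X \<in> Q"
  then obtain x where "x \<in> X" "x \<in> W"
    using assms(1) unfolding is_partition_def by blast
  have "X \<subseteq> T `` {x}"
    using \<open>X \<in> Q\<close> \<open>x \<in> X\<close> assms(2) unfolding same_block_def by blast
  then show "\<exists>Y\<in>W // T. X \<subseteq> Y"
    using \<open>x \<in> W\<close> by (auto intro: quotientI)
qed

lemma quotient_refines:
  assumes "T \<subseteq> same_block R" "disjoint R" "W \<subseteq> \<Union>R"
  shows "refines (W // T) R"
  unfolding refines_def
proof
  fix B assume "B \<in> W // T"
  then obtain x where x: "x \<in> W" "B = T `` {x}"
    by (auto elim: quotientE)
  then obtain Y where "Y \<in> R" "x \<in> Y"
    using assms(3) by blast
  have "B \<subseteq> Y"
  proof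
    fix y assume "y \<in> B"
    then obtain Y' where "Y' \<in> R" "x \<in> Y'" "y \<in> Y'"
      using x assms(1) unfolding same_block_def by blast
    then show "y \<in> Y"
      using disjoint_common_element_eq[OF assms(2) \<open>Y \<in> R\<close>] \<open>x \<in> Y\<close> by blast
  qed
  then show "\<exists>Y\<in>R. B \<subseteq> Y"
    using \<open>Y \<in> R\<close> by blast
qed

lemma quotient_class_Union_blocks:
  assumes "equiv W T" "is_partition Q W" "same_block Q \<subseteq> T" "B \<in> W // T"
  shows "B = \<Union>{Y \<in> Q. Y \<subseteq> B}"
proof
  obtain x where x: "x \<in> W" "B = T `` {x}"
    using \<open>B \<in> W // T\<close> by (auto elim: quotientE)
  show "B \<subseteq> \<Union>{Y \<in> Q. Y \<subseteq> B}"
  proof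
    fix u assume "u \<in> B"
    then have "u \<in> W"
      using x equiv_type[OF \<open>equiv W T\<close>] by blast
    then obtain Y where Y: "Y \<in> Q" "u \<in> Y"
      using \<open>is_partition Q W\<close> unfolding is_partition_def by blast
    have "Y \<subseteq> B"
    proof
      fix y assume "y \<in> Y"
      then have "(u, y) \<in> T"
        using Y \<open>same_block Q \<subseteq> T\<close> unfolding same_block_def by blast
      then show "y \<in> B"
        using \<open>u \<in> B\<close> x \<open>equiv W T\<close> by (meson Image_singleton_iff equivE transD)
    qed
    then show "u \<in> \<Union>{Y \<in> Q. Y \<subseteq> B}"
      using Y by blast
  qed
qed blast

lemma stable_partition_card_Union_eq:
  assumes stable: "stable_partition W F Q" and "finite W"
    and "Qs \<subseteq> Q" "X \<in> Q" "v \<in> X" "w \<in> X"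
  shows "card {u \<in> \<Union>Qs. (v, u) \<in> F} = card {u \<in> \<Union>Qs. (w, u) \<in> F}"
proof -
  have part: "partition_on W Q"
    using stable by (simp add: stable_partition_def is_partition_iff_partition_on)
  have "finite Qs"
    using finite_elements[OF \<open>finite W\<close> part] \<open>Qs \<subseteq> Q\<close> by (rule finite_subset[rotated])
  have fin: "finite Y" if "Y \<in> Qs" for Y
    using that \<open>Qs \<subseteq> Q\<close> partition_onD1[OF part] \<open>finite W\<close> by (metis Union_upper finite_subset subsetD)
  have disj: "disjoint Qs"
    using partition_onD2[OF part] \<open>Qs \<subseteq> Q\<close> by (rule pairwise_subset)
  have count: "card {u \<in> \<Union>Qs. (x, u) \<in> F} = (\<Sum>Y\<in>Qs. card {u \<in> Y. (x, u) \<in> F})" for x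
  proof -
    have "{u \<in> \<Union>Qs. (x, u) \<in> F} = (\<Union>Y\<in>Qs. {u \<in> Y. (x, u) \<in> F})"
      by blast
    also have "card \<dots> = (\<Sum>Y\<in>Qs. card {u \<in> Y. (x, u) \<in> F})"
      using \<open>finite Qs\<close> fin disj by (intro card_UN_disjoint) (auto simp: disjoint_def disjnt_def)
    finally show ?thesis .
  qed
  have "card {u \<in> Y. (v, u) \<in> F} = card {u \<in> Y. (w, u) \<in> F}" if "Y \<in> Qs" for Y
    using stable \<open>X \<in> Q\<close> \<open>Y \<in> Qs\<close> \<open>Qs \<subseteq> Q\<close> \<open>v \<in> X\<close> \<open>w \<in> X\<close>
    unfolding stable_partition_def by blast
  then show ?thesis
    unfolding count by (rule sum.cong[OF refl])
qed

lemma stable_partition_join: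
  assumes "finite W" and stable: "\<And>Q. Q \<in> S \<Longrightarrow> stable_partition W F Q"
    and T: "T = (\<Union>Q\<in>S. same_block Q)\<^sup>+" "equiv W T"
  shows "stable_partition W F (W // T)"
  unfolding stable_partition_def
proof (intro conjI ballI)
  show "is_partition (W // T) W"
    using partition_on_quotient[OF \<open>equiv W T\<close>] by (simp add: is_partition_iff_partition_on)
  fix X B v w assume "X \<in> W // T" "B \<in> W // T" "v \<in> X" "w \<in> X"
  have count_eq: "card {u \<in> B. (x, u) \<in> F} = card {u \<in> B. (y, u) \<in> F}"
    if "Q \<in> S" "(x, y) \<in> same_block Q" for Q x y
  proof -
    have "is_partition Q W"
      using stable[OF \<open>Q \<in> S\<close>] unfolding stable_partition_def by (rule conjunct1)
    moreover have "same_block Q \<subseteq> T"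
      using \<open>Q \<in> S\<close> unfolding T(1) by (auto intro: r_into_trancl)
    ultimately have B: "B = \<Union>{Y \<in> Q. Y \<subseteq> B}"
      using quotient_class_Union_blocks \<open>equiv W T\<close> \<open>B \<in> W // T\<close> by blast
    obtain Y where "Y \<in> Q" "x \<in> Y" "y \<in> Y"
      using \<open>(x, y) \<in> same_block Q\<close> unfolding same_block_def by blast
    then have "card {u \<in> \<Union>{Y \<in> Q. Y \<subseteq> B}. (x, u) \<in> F} = card {u \<in> \<Union>{Y \<in> Q. Y \<subseteq> B}. (y, u) \<in> F}"
      by (intro stable_partition_card_Union_eq[OF stable[OF \<open>Q \<in> S\<close>] \<open>finite W\<close>]) auto
    then show ?thesis
      by (simp only: B[symmetric])
  qed
  have "(v, w) \<in> T"
    using \<open>X \<in> W // T\<close> \<open>v \<in> X\<close> \<open>w \<in> X\<close> \<open>equiv W T\<close> by (meson quotient_eq_iff)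
  then show "card {u \<in> B. (v, u) \<in> F} = card {u \<in> B. (w, u) \<in> F}"
    unfolding T(1)
  proof (induction rule: trancl_induct)
    case (base y)
    then obtain Q where "Q \<in> S" "(v, y) \<in> same_block Q"
      by blast
    then show ?case
      by (rule count_eq)
  next
    case (step y z)
    then obtain Q where "Q \<in> S" "(y, z) \<in> same_block Q"
      by blast
    then show ?case
      using step.IH count_eq by simp
  qed
qed

lemma coarsest_stable_refinement_exists:
  assumes "finite W" and R: "disjoint R" "W \<subseteq> \<Union>R"
  shows "\<exists>Q. coarsest_stable_refinement W F R Q"
proof -
  define S where "S = {Q. stable_partition W F Q \<and> refines Q R}"
  define T where "T = (\<Union>Q\<in>S. same_block Q)\<^sup>+"
  have S_partition: "is_partition Q W" if "Q \<in> S" for Q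
    using that unfolding S_def stable_partition_def by blast
  have block_T: "same_block Q \<subseteq> T" if "Q \<in> S" for Q
    using that unfolding T_def by (auto intro: r_into_trancl)
  have singletons: "(\<lambda>x. {x}) ` W \<in> S"
    using R(2) unfolding S_def stable_partition_def refines_def
    by (simp add: is_partition_iff_partition_on partition_on_singletons) blast
  have equiv: "equiv W T"
  proof (rule equivI)
    show "T \<subseteq> W \<times> W"
      unfolding T_def
      by (intro trancl_subset_Sigma UN_least equiv_type equiv_same_block S_partition)
    show "refl_on W T"
      using equiv_same_block[OF S_partition[OF singletons]] block_T[OF singletons]
      unfolding equiv_def refl_on_def by blast
    show "sym T"
      unfolding T_def by (intro sym_trancl) (auto simp: sym_def same_block_def)
  qed (simp add: T_def trans_trancl)
  have "T \<subseteq> same_block R"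
  proof -
    have "T \<subseteq> (same_block R)\<^sup>+"
      unfolding T_def S_def by (intro trancl_mono_subset UN_least) (simp add: same_block_mono)
    then show ?thesis
      using trans_same_block[OF R(1)] by simp
  qed
  have "coarsest_stable_refinement W F R (W // T)"
    unfolding coarsest_stable_refinement_def
  proof (intro conjI allI impI)
    show "stable_partition W F (W // T)"
      by (rule stable_partition_join[OF \<open>finite W\<close> _ T_def equiv]) (simp add: S_def)
    show "refines (W // T) R"
      by (rule quotient_refines[OF \<open>T \<subseteq> same_block R\<close> R])
    fix Q assume "stable_partition W F Q \<and> refines Q R"
    then have "Q \<in> S"
      by (simp add: S_def)
    then show "refines Q (W // T)"
      using refines_quotient S_partition block_T by blast
  qed
  then show ?thesis ..
qed

lemma clique_stable_card_nbhd_eq: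
  assumes "fin_graph V E" and cs: "clique_stable V E P"
    and "X \<in> P" "Y \<in> P" "v \<in> X" "w \<in> X"
  shows "card {y \<in> Y. (v, y) \<in> E} = card {y \<in> Y. (w, y) \<in> E}"
proof -
  let ?R = "(\<lambda>X. Inl ` X) ` P \<union> {Inr ` max_cliques V E}"
  have P: "is_partition P V"
    using cs by (simp add: clique_stable_def)
  have "finite V"
    using assms(1) by (simp add: fin_graph_def)
  then have "finite (max_cliques V E)"
    unfolding max_cliques_def is_clique_def by (auto intro: finite_subset[of _ "Pow V"])
  then have "finite (star_vertices V E)"
    using \<open>finite V\<close> by (simp add: star_vertices_def)
  moreover have "disjoint ?R"
  proof (rule disjoint_union)
    show "disjoint ((\<lambda>X. Inl ` X) ` P)"
      using P by (intro disjoint_image) (auto simp: is_partition_def)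
  qed auto
  moreover have "star_vertices V E \<subseteq> \<Union>?R"
    using P by (auto simp: star_vertices_def is_partition_def)
  ultimately obtain Q where Q: "coarsest_stable_refinement (star_vertices V E) (star_edges V E) ?R Q"
    using coarsest_stable_refinement_exists by blast
  then have "Inl ` X \<in> Q" "Inl ` Y \<in> Q"
    using cs assms(3,4) unfolding clique_stable_def by blast+
  moreover have "stable_partition (star_vertices V E) (star_edges V E) Q"
    using Q by (simp add: coarsest_stable_refinement_def)
  ultimately have "card {u \<in> Inl ` Y. (Inl v, u) \<in> star_edges V E} =
      card {u \<in> Inl ` Y. (Inl w, u) \<in> star_edges V E}"
    using assms(5,6) unfolding stable_partition_def by blast
  moreover have "{u \<in> Inl ` Y. (Inl x, u) \<in> star_edges V E} = Inl ` {y \<in> Y. (x, y) \<in> E}" for x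
    unfolding star_edges_def by auto
  ultimately show ?thesis
    by (simp add: card_image)
qed

section \<open>Biregular staircases\<close>

lemma lift_Suc_mono_le_interval:
  fixes g :: "nat \<Rightarrow> 'a::preorder"
  assumes "\<And>i. 1 \<le> i \<Longrightarrow> i < n \<Longrightarrow> g i \<le> g (i + 1)"
    and "1 \<le> i" "i \<le> i'" "i' \<le> n"
  shows "g i \<le> g i'"
  using \<open>i \<le> i'\<close> \<open>i' \<le> n\<close>
proof (induction i' rule: dec_induct)
  case (step m)
  then have "g i \<le> g m"
    by simp
  also have "g m \<le> g (m + 1)"
    using assms(1)[of m] step \<open>1 \<le> i\<close> by simp
  finally show ?case
    by simp
qed simp

lemma downward_closed_eq_atLeastAtMost:
  assumes S: "S \<subseteq> {1..n}" and closed: "\<And>i i'. i \<in> S \<Longrightarrow> 1 \<le> i' \<Longrightarrow> i' \<le> i \<Longrightarrow> i' \<in> S"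
  shows "S = {1..card S}"
proof
  have "finite S"
    using S finite_subset by blast
  show "S \<subseteq> {1..card S}"
  proof
    fix i assume "i \<in> S"
    then have "{1..i} \<subseteq> S"
      using closed[OF \<open>i \<in> S\<close>] by auto
    then have "card {1..i} \<le> card S"
      by (rule card_mono[OF \<open>finite S\<close>])
    then have "i \<le> card S"
      by simp
    then show "i \<in> {1..card S}"
      using \<open>i \<in> S\<close> S by auto
  qed
  show "{1..card S} \<subseteq> S"
  proof
    fix i assume i: "i \<in> {1..card S}"
    show "i \<in> S"
    proof (rule ccontr)
      assume "i \<notin> S"
      have "S \<subseteq> {1..i - 1}"
      proof
        fix j assume "j \<in> S"
        then have "j < i"
          using closed[of j i] \<open>i \<notin> S\<close> i by (meson atLeastAtMost_iff not_le_imp_less)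
        then show "j \<in> {1..i - 1}"
          using \<open>j \<in> S\<close> S by auto
      qed
      then have "card S \<le> card {1..i - 1}"
        by (rule card_mono[OF finite_atLeastAtMost])
      then have "card S \<le> i - 1"
        by simp
      then show False
        using i by auto
    qed
  qed
qed

lemma card_filter_atLeastAtMost_shift:
  fixes d t :: nat
  assumes "\<And>j. 1 \<le> j \<Longrightarrow> j \<le> d \<Longrightarrow> \<not> P j"
  shows "card {j \<in> {1..t}. P j} = card {j \<in> {1..t - d}. P (j + d)}"
proof -
  have "{j \<in> {1..t}. P j} = (\<lambda>j. j + d) ` {j \<in> {1..t - d}. P (j + d)}"
  proof (rule set_eqI, rule iffI)
    fix j assume j: "j \<in> {j \<in> {1..t}. P j}"
    have "d < j"
    proof (rule ccontr)
      assume "\<not> d < j"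
      then have "j \<le> d"
        by simp
      then show False
        using assms[of j] j by simp
    qed
    with j show "j \<in> (\<lambda>j. j + d) ` {j \<in> {1..t - d}. P (j + d)}"
      by (intro image_eqI[where x="j - d"]) auto
  qed auto
  then show ?thesis
    by (simp add: card_image)
qed

lemma card_filter_bij_betw:
  assumes "bij_betw h I Z"
  shows "card {i \<in> I. Q (h i)} = card {z \<in> Z. Q z}"
proof -
  have "{z \<in> Z. Q z} = h ` {i \<in> I. Q (h i)}"
    using assms unfolding bij_betw_def by auto
  moreover have "inj_on h {i \<in> I. Q (h i)}"
    using assms unfolding bij_betw_def by (auto intro: inj_on_subset)
  ultimately show ?thesis
    by (simp add: card_image)
qed

text \<open>Models the edges between two blocks of equal orientation, each enumerated by increasing first
  coordinate: \<open>A i j\<close> says that the \<open>i\<close>-th vertex of the first block lies weakly below-left of the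
  \<open>j\<close>-th vertex of the second one shifted by \<open>(1, 1)\<close>, and \<open>B\<close> is the converse.\<close>
locale biregular_staircase =
  fixes s t d e :: nat and A B :: "nat \<Rightarrow> nat \<Rightarrow> bool"
  assumes d_pos: "1 \<le> d" and e_pos: "1 \<le> e"
    and A_mono: "\<And>i i' j j'. \<lbrakk>1 \<le> i'; i' \<le> i; i \<le> s; 1 \<le> j; j \<le> j'; j' \<le> t; A i j\<rbrakk> \<Longrightarrow> A i' j'"
    and B_mono: "\<And>i i' j j'. \<lbrakk>1 \<le> i; i \<le> i'; i' \<le> s; 1 \<le> j'; j' \<le> j; j \<le> t; B i j\<rbrakk> \<Longrightarrow> B i' j'"
    and row_card: "\<And>i. i \<in> {1..s} \<Longrightarrow> card {j \<in> {1..t}. A i j \<and> B i j} = d"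
    and col_card: "\<And>j. j \<in> {1..t} \<Longrightarrow> card {i \<in> {1..s}. A i j \<and> B i j} = e"
begin

lemma first_column_and_row:
  assumes "1 \<le> s"
  shows "{i \<in> {1..s}. A i 1 \<and> B i 1} = {1..e}" and "{j \<in> {1..t}. A 1 j \<and> B 1 j} = {1..d}"
proof -
  have "0 < card {j \<in> {1..t}. A 1 j \<and> B 1 j}"
    using row_card[of 1] d_pos assms by simp
  then obtain j0 where j0: "j0 \<in> {1..t}" "A 1 j0" "B 1 j0"
    unfolding card_gt_0_iff by blast
  then have "1 \<le> t"
    by simp
  have "0 < card {i \<in> {1..s}. A i 1 \<and> B i 1}"
    using col_card[of 1] e_pos \<open>1 \<le> t\<close> by simp
  then obtain i0 where i0: "i0 \<in> {1..s}" "A i0 1" "B i0 1"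
    unfolding card_gt_0_iff by blast
  have B_col1: "B i 1" if "i \<in> {1..s}" for i
    by (rule B_mono[where i=1 and j=j0]) (use j0 that in auto)
  have A_row1: "A 1 j" if "j \<in> {1..t}" for j
    by (rule A_mono[where i=i0 and j=1]) (use i0 that in auto)
  show "{i \<in> {1..s}. A i 1 \<and> B i 1} = {1..e}"
  proof -
    have "{i \<in> {1..s}. A i 1 \<and> B i 1} = {i \<in> {1..s}. A i 1}"
      using B_col1 by blast
    also have "\<dots> = {1..card {i \<in> {1..s}. A i 1}}"
      using A_mono[where j=1 and j'=1] \<open>1 \<le> t\<close> by (intro downward_closed_eq_atLeastAtMost) auto
    finally show ?thesis
      using col_card[of 1] \<open>1 \<le> t\<close> by simp
  qed
  show "{j \<in> {1..t}. A 1 j \<and> B 1 j} = {1..d}"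
  proof -
    have "{j \<in> {1..t}. A 1 j \<and> B 1 j} = {j \<in> {1..t}. B 1 j}"
      using A_row1 by blast
    also have "\<dots> = {1..card {j \<in> {1..t}. B 1 j}}"
      using B_mono[where i=1 and i'=1] assms by (intro downward_closed_eq_atLeastAtMost) auto
    finally show ?thesis
      using row_card[of 1] assms by simp
  qed
qed

lemma first_block:
  assumes "1 \<le> s"
  shows "e \<le> s" and "d \<le> t"
    and "\<And>i j. \<lbrakk>i \<in> {1..s}; j \<in> {1..t}; i \<le> e \<or> j \<le> d\<rbrakk> \<Longrightarrow> A i j \<and> B i j \<longleftrightarrow> i \<le> e \<and> j \<le> d"
proof -
  note col1 = first_column_and_row(1)[OF assms] and row1 = first_column_and_row(2)[OF assms]
  show "e \<le> s" "d \<le> t"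
    using col1 row1 e_pos d_pos by (auto simp: set_eq_iff)
  have block: "A i j \<and> B i j" if "i \<in> {1..e}" "j \<in> {1..d}" for i j
  proof -
    have "i \<in> {i \<in> {1..s}. A i 1 \<and> B i 1}" "j \<in> {j \<in> {1..t}. A 1 j \<and> B 1 j}"
      using col1 row1 that by blast+
    then show ?thesis
      using A_mono[where i=i and i'=i and j=1 and j'=j] B_mono[where i=1 and i'=i and j=j and j'=j]
      by auto
  qed
  have row: "{1..d} = {j \<in> {1..t}. A i j \<and> B i j}" if "i \<in> {1..e}" for i
  proof (rule card_subset_eq)
    show "{1..d} \<subseteq> {j \<in> {1..t}. A i j \<and> B i j}"
      using block[OF that] \<open>d \<le> t\<close> by auto
    show "card {1..d} = card {j \<in> {1..t}. A i j \<and> B i j}"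
      using row_card[of i] that \<open>e \<le> s\<close> by simp
  qed simp
  have col: "{1..e} = {i \<in> {1..s}. A i j \<and> B i j}" if "j \<in> {1..d}" for j
  proof (rule card_subset_eq)
    show "{1..e} \<subseteq> {i \<in> {1..s}. A i j \<and> B i j}"
      using block[OF _ that] \<open>e \<le> s\<close> by auto
    show "card {1..e} = card {i \<in> {1..s}. A i j \<and> B i j}"
      using col_card[of j] that \<open>d \<le> t\<close> by simp
  qed simp
  fix i j assume i: "i \<in> {1..s}" and j: "j \<in> {1..t}" and "i \<le> e \<or> j \<le> d"
  then show "A i j \<and> B i j \<longleftrightarrow> i \<le> e \<and> j \<le> d"
  proof (elim disjE)
    assume "i \<le> e"
    then have "j \<in> {1..d} \<longleftrightarrow> j \<in> {j \<in> {1..t}. A i j \<and> B i j}"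
      using row[of i] i by simp
    then show ?thesis
      using \<open>i \<le> e\<close> j by auto
  next
    assume "j \<le> d"
    then have "i \<in> {1..e} \<longleftrightarrow> i \<in> {i \<in> {1..s}. A i j \<and> B i j}"
      using col[of j] j by simp
    then show ?thesis
      using \<open>j \<le> d\<close> i by auto
  qed
qed

lemma shift_past_first_block:
  assumes "1 \<le> s"
  shows "biregular_staircase (s - e) (t - d) d e (\<lambda>i j. A (i + e) (j + d)) (\<lambda>i j. B (i + e) (j + d))"
proof unfold_locales
  note block = first_block[OF assms]
  show "1 \<le> d"
    by (fact d_pos)
  show "1 \<le> e"
    by (fact e_pos)
  show "A (i' + e) (j' + d)"
    if "1 \<le> i'" "i' \<le> i" "i \<le> s - e" "1 \<le> j" "j \<le> j'" "j' \<le> t - d" "A (i + e) (j + d)"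
    for i i' j j'
    by (rule A_mono[where i="i + e" and j="j + d"]) (use that in auto)
  show "B (i' + e) (j' + d)"
    if "1 \<le> i" "i \<le> i'" "i' \<le> s - e" "1 \<le> j'" "j' \<le> j" "j \<le> t - d" "B (i + e) (j + d)"
    for i i' j j'
    by (rule B_mono[where i="i + e" and j="j + d"]) (use that in auto)
  show "card {j \<in> {1..t - d}. A (i + e) (j + d) \<and> B (i + e) (j + d)} = d" if i: "i \<in> {1..s - e}" for i
  proof -
    have "i + e \<in> {1..s}"
      using i by auto
    then have "card {j \<in> {1..t}. A (i + e) j \<and> B (i + e) j} = d"
      by (rule row_card)
    moreover have "\<not> (A (i + e) j \<and> B (i + e) j)" if "1 \<le> j" "j \<le> d" for j
      using block(3)[of "i + e" j] \<open>i + e \<in> {1..s}\<close> block(2) i that by auto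
    ultimately show ?thesis
      using card_filter_atLeastAtMost_shift[where P="\<lambda>j. A (i + e) j \<and> B (i + e) j" and d=d and t=t]
      by simp
  qed
  show "card {i \<in> {1..s - e}. A (i + e) (j + d) \<and> B (i + e) (j + d)} = e" if j: "j \<in> {1..t - d}" for j
  proof -
    have "j + d \<in> {1..t}"
      using j by auto
    then have "card {i \<in> {1..s}. A i (j + d) \<and> B i (j + d)} = e"
      by (rule col_card)
    moreover have "\<not> (A i (j + d) \<and> B i (j + d))" if "1 \<le> i" "i \<le> e" for i
      using block(3)[of i "j + d"] \<open>j + d \<in> {1..t}\<close> block(1) j that by auto
    ultimately show ?thesis
      using card_filter_atLeastAtMost_shift[where P="\<lambda>i. A i (j + d) \<and> B i (j + d)" and d=e and t=s]
      by simp
  qed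
qed

end

lemma biregular_staircase_blocks:
  assumes "biregular_staircase s t d e A B" "i \<in> {1..s}" "j \<in> {1..t}"
  shows "A i j \<and> B i j \<longleftrightarrow> (i - 1) div e = (j - 1) div d"
  using assms
proof (induction s arbitrary: t A B i j rule: less_induct)
  case (less s)
  interpret biregular_staircase s t d e A B
    by (fact less.prems(1))
  have "1 \<le> s"
    using less.prems(2) by simp
  note block = first_block[OF this]
  show ?case
  proof (cases "i \<le> e \<or> j \<le> d")
    case True
    then show ?thesis
      using block(3)[OF less.prems(2,3)] less.prems(2,3) d_pos e_pos by (auto simp: div_eq_0_iff)
  next
    case False
    then have "i - e \<in> {1..s - e}" "j - d \<in> {1..t - d}"
      using less.prems(2,3) by auto
    from less.IH[OF _ shift_past_first_block[OF \<open>1 \<le> s\<close>] this]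
    have IH: "A i j \<and> B i j \<longleftrightarrow> (i - e - 1) div e = (j - d - 1) div d"
      using e_pos \<open>1 \<le> s\<close> False by simp
    have "e \<le> i - 1" "d \<le> j - 1"
      using False by auto
    then have "(i - 1) div e = (i - e - 1) div e + 1" "(j - 1) div d = (j - d - 1) div d + 1"
      using d_pos e_pos le_div_geq[of e "i - 1"] le_div_geq[of d "j - 1"] by simp_all
    with IH show ?thesis
      by simp
  qed
qed

lemma ceiling_of_nat_divide:
  assumes "1 \<le> i" "1 \<le> e"
  shows "\<lceil>real i / real e\<rceil> = int ((i - 1) div e) + 1"
proof -
  define q r where "q = (i - 1) div e" and "r = (i - 1) mod e"
  have "i = q * e + r + 1" and "r < e"
    using assms by (simp_all add: q_def r_def)
  then have "real i / real e = real q + (real r + 1) / real e"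
    using assms by (simp add: field_simps)
  moreover have "0 < (real r + 1) / real e" "(real r + 1) / real e \<le> 1"
    using \<open>r < e\<close> assms by auto
  ultimately show ?thesis
    unfolding q_def[symmetric] by (intro ceiling_unique) auto
qed

section \<open>Unit squares in the maximum norm\<close>

lemma dist_inf_le_1_iff: "dist_inf p q \<le> 1 \<longleftrightarrow> \<bar>fst p - fst q\<bar> \<le> 1 \<and> \<bar>snd p - snd q\<bar> \<le> 1"
  unfolding dist_inf_def by simp

lemma dist_inf_commute: "dist_inf p q = dist_inf q p"
  unfolding dist_inf_def by (simp add: abs_minus_commute)

definition reflect :: "real \<Rightarrow> real \<times> real \<Rightarrow> real \<times> real" where
  "reflect b p = (fst p, b * snd p)"

lemma reflect_simps [simp]: "fst (reflect b p) = fst p" "snd (reflect b p) = b * snd p"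
  unfolding reflect_def by simp_all

lemma dist_inf_reflect: "b \<in> {-1, 1} \<Longrightarrow> dist_inf (reflect b p) (reflect b q) = dist_inf p q"
  unfolding dist_inf_def by (auto simp: abs_minus_commute)

definition separating_pair :: "real \<times> real \<Rightarrow> real \<times> real \<Rightarrow> real \<times> real \<Rightarrow> real \<times> real \<Rightarrow> bool" where
  "separating_pair v w z z' \<longleftrightarrow> dist_inf v w \<le> 1 \<and> dist_inf z z' \<le> 1 \<and>
     dist_inf z v \<le> 1 \<and> \<not> dist_inf z w \<le> 1 \<and> dist_inf z' w \<le> 1 \<and> \<not> dist_inf z' v \<le> 1"

lemma separating_pair_reflect:
  "b \<in> {-1, 1} \<Longrightarrow>
    separating_pair (reflect b v) (reflect b w) (reflect b z) (reflect b z') \<longleftrightarrow> separating_pair v w z z'"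
  unfolding separating_pair_def by (simp add: dist_inf_reflect)

lemma separating_pair_coords_distinct:
  "separating_pair v w z z' \<Longrightarrow> fst v \<noteq> fst w \<and> snd v \<noteq> snd w"
  unfolding separating_pair_def dist_inf_le_1_iff by (auto simp: abs_le_iff)

lemma separating_pair_nested:
  assumes "separating_pair v w z z'" "fst v < fst w" "snd w < snd v"
    and "dist_inf x v \<le> 1" "dist_inf x w \<le> 1" "dist_inf x' v \<le> 1" "dist_inf x' w \<le> 1"
    and "fst x \<le> fst x'" "snd x \<le> snd x'"
  shows "(\<forall>u. dist_inf u z \<le> 1 \<and> dist_inf u z' \<le> 1 \<and> dist_inf u x \<le> 1 \<longrightarrow> dist_inf u x' \<le> 1) \<or>
    (\<forall>u. dist_inf u z \<le> 1 \<and> dist_inf u z' \<le> 1 \<and> dist_inf u x' \<le> 1 \<longrightarrow> dist_inf u x \<le> 1)"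
proof -
  have "fst v + 1 < fst z' \<and> snd w + 1 < snd z \<or> fst z < fst w - 1 \<and> snd z' < snd v - 1"
    using assms(1-3) unfolding separating_pair_def dist_inf_le_1_iff by (auto simp: abs_le_iff)
  then show ?thesis
  proof
    assume "fst v + 1 < fst z' \<and> snd w + 1 < snd z"
    then show ?thesis
      using assms(4-) unfolding dist_inf_le_1_iff by (auto simp: abs_le_iff)
  next
    assume "fst z < fst w - 1 \<and> snd z' < snd v - 1"
    then show ?thesis
      using assms(4-) unfolding dist_inf_le_1_iff by (auto simp: abs_le_iff)
  qed
qed

lemma opposite_orientations_no_induced_matching:
  assumes "b \<in> {-1, 1}" and "dist_inf x x' \<le> 1" "dist_inf y y' \<le> 1"
    and "fst x \<le> fst x' \<longleftrightarrow> b * snd x \<le> b * snd x'" "fst x' \<le> fst x \<longleftrightarrow> b * snd x' \<le> b * snd x"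
    and "fst y \<le> fst y' \<longleftrightarrow> - b * snd y \<le> - b * snd y'" "fst y' \<le> fst y \<longleftrightarrow> - b * snd y' \<le> - b * snd y"
    and "dist_inf x y \<le> 1" "dist_inf x' y' \<le> 1"
  shows "dist_inf x y' \<le> 1 \<or> dist_inf x' y \<le> 1"
proof -
  have "b = 1 \<or> b = -1" "fst x \<le> fst x' \<or> fst x' \<le> fst x" "fst y \<le> fst y' \<or> fst y' \<le> fst y"
    using assms(1) by auto
  then show ?thesis
    using assms(2-) unfolding dist_inf_le_1_iff abs_le_iff by (elim disjE) auto
qed

lemma separating_pair_swap: "separating_pair v w z z' \<longleftrightarrow> separating_pair w v z' z"
  unfolding separating_pair_def by (auto simp: dist_inf_commute)

definition shifted_le :: "real \<Rightarrow> real \<times> real \<Rightarrow> real \<times> real \<Rightarrow> bool" where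
  "shifted_le b p q \<longleftrightarrow> fst p \<le> fst q + 1 \<and> b * snd p \<le> b * snd q + 1"

lemma dist_inf_le_1_iff_shifted_le:
  assumes "b \<in> {-1, 1}"
  shows "dist_inf p q \<le> 1 \<longleftrightarrow> shifted_le b p q \<and> shifted_le b q p"
  using assms unfolding dist_inf_le_1_iff shifted_le_def abs_le_iff by (elim insertE) auto

section \<open>Clique-stable partitions of a realized unit square graph\<close>

lemma constant_on_one_of_covering_relations:
  assumes cover: "\<And>x y. x \<in> X \<Longrightarrow> y \<in> X \<Longrightarrow> R x y \<or> S x y"
    and g: "\<And>x y. x \<in> X \<Longrightarrow> y \<in> X \<Longrightarrow> R x y \<Longrightarrow> g x = g y"
    and h: "\<And>x y. x \<in> X \<Longrightarrow> y \<in> X \<Longrightarrow> S x y \<Longrightarrow> h x = h y"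
  shows "(\<forall>x\<in>X. \<forall>y\<in>X. g x = g y) \<or> (\<forall>x\<in>X. \<forall>y\<in>X. h x = h y)"
proof (rule disjCI)
  assume "\<not> (\<forall>x\<in>X. \<forall>y\<in>X. h x = h y)"
  then obtain v w where vw: "v \<in> X" "w \<in> X" "h v \<noteq> h w"
    by blast
  have h_g: "g x = g y" if "x \<in> X" "y \<in> X" "h x \<noteq> h y" for x y
    using cover[OF that(1,2)] g[OF that(1,2)] h[OF that(1,2)] that(3) by blast
  have "g x = g v" if "x \<in> X" for x
  proof (cases "h x = h v")
    case True
    then show ?thesis
      using h_g[OF that vw(2)] h_g[OF vw] vw(3) by simp
  next
    case False
    then show ?thesis
      using h_g[OF that vw(1)] by simp
  qed
  then show "\<forall>x\<in>X. \<forall>y\<in>X. g x = g y"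
    by simp
qed

locale clique_stable_realization =
  fixes V :: "'v set" and E :: "('v \<times> 'v) set" and P :: "'v set set"
    and f :: "'v \<Rightarrow> real \<times> real"
  assumes graph: "fin_graph V E" and twin_free: "twin_free V E"
    and clique_stable: "clique_stable V E P" and realization: "realization V E f"
begin

definition nbhd_in :: "'v set \<Rightarrow> 'v \<Rightarrow> 'v set" where
  "nbhd_in Z x = {u \<in> Z. (x, u) \<in> E}"

lemma edge_sym: "(x, y) \<in> E \<Longrightarrow> (y, x) \<in> E"
  using graph unfolding fin_graph_def sym_def by blast

lemma is_partition_blocks: "is_partition P V"
  using clique_stable unfolding clique_stable_def by blast

lemma block_subset: "X \<in> P \<Longrightarrow> X \<subseteq> V"
  using is_partition_blocks unfolding is_partition_def by blast

lemma block_nonempty: "X \<in> P \<Longrightarrow> X \<noteq> {}"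
  using is_partition_blocks unfolding is_partition_def by blast

lemma finite_block: "X \<in> P \<Longrightarrow> finite X"
  using block_subset graph finite_subset unfolding fin_graph_def by blast

lemma card_block_pos: "X \<in> P \<Longrightarrow> 1 \<le> card X"
  using finite_block block_nonempty by (simp add: Suc_le_eq card_gt_0_iff)

lemma block_cover: "v \<in> V \<Longrightarrow> \<exists>Z\<in>P. v \<in> Z"
  using is_partition_blocks unfolding is_partition_def by blast

lemma blocks_disjoint: "X \<in> P \<Longrightarrow> Y \<in> P \<Longrightarrow> X \<noteq> Y \<Longrightarrow> x \<in> X \<Longrightarrow> y \<in> Y \<Longrightarrow> x \<noteq> y"
  using is_partition_blocks unfolding is_partition_def disjoint_def by blast

lemma edge_in_block: "X \<in> P \<Longrightarrow> x \<in> X \<Longrightarrow> y \<in> X \<Longrightarrow> x \<noteq> y \<Longrightarrow> (x, y) \<in> E"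
  using clique_stable unfolding clique_stable_def is_clique_def by blast

lemma edge_iff_dist_inf: "x \<in> V \<Longrightarrow> y \<in> V \<Longrightarrow> x \<noteq> y \<Longrightarrow> (x, y) \<in> E \<longleftrightarrow> dist_inf (f x) (f y) \<le> 1"
  using realization unfolding realization_def by blast

lemma dist_inf_in_block:
  assumes "X \<in> P" "x \<in> X" "y \<in> X"
  shows "dist_inf (f x) (f y) \<le> 1"
proof (cases "x = y")
  case False
  then show ?thesis
    using assms edge_in_block edge_iff_dist_inf block_subset by blast
qed (simp add: dist_inf_def)

lemma edge_between_blocks_iff:
  assumes "X \<in> P" "Y \<in> P" "X \<noteq> Y" "x \<in> X" "y \<in> Y"
  shows "(x, y) \<in> E \<longleftrightarrow> dist_inf (f x) (f y) \<le> 1"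
  using assms blocks_disjoint edge_iff_dist_inf block_subset by blast

lemma card_nbhd_in_eq:
  "X \<in> P \<Longrightarrow> Y \<in> P \<Longrightarrow> v \<in> X \<Longrightarrow> w \<in> X \<Longrightarrow> card (nbhd_in Y v) = card (nbhd_in Y w)"
  unfolding nbhd_in_def using clique_stable_card_nbhd_eq[OF graph clique_stable] .

lemma nbhd_in_eq_of_subset:
  assumes "X \<in> P" "Y \<in> P" "v \<in> X" "w \<in> X" "nbhd_in Y v \<subseteq> nbhd_in Y w"
  shows "nbhd_in Y v = nbhd_in Y w"
proof (rule card_subset_eq)
  show "finite (nbhd_in Y w)"
    unfolding nbhd_in_def using finite_block[OF assms(2)] by simp
  show "card (nbhd_in Y v) = card (nbhd_in Y w)"
    using card_nbhd_in_eq assms(1-4) .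
qed (fact assms(5))

lemma opposite_separator_in_block:
  assumes "X \<in> P" "Z \<in> P" "v \<in> X" "w \<in> X" "z \<in> Z" "(v, z) \<in> E" "(w, z) \<notin> E"
  obtains z' where "z' \<in> Z" "(w, z') \<in> E" "(v, z') \<notin> E"
proof -
  have "z \<in> nbhd_in Z v" "z \<notin> nbhd_in Z w"
    unfolding nbhd_in_def using assms(5-7) by auto
  then have "\<not> nbhd_in Z w \<subseteq> nbhd_in Z v"
    using nbhd_in_eq_of_subset[OF assms(1,2,4,3)] by blast
  then show ?thesis
    using that unfolding nbhd_in_def by blast
qed

lemma separating_block_of_vertex:
  assumes X: "X \<in> P" and "v \<in> X" "w \<in> X" "z \<in> V" "z \<noteq> w" "(v, z) \<in> E" "(w, z) \<notin> E"
  obtains Z z' where "Z \<in> P" "Z \<noteq> X" "z \<in> Z" "z' \<in> Z" "(w, z') \<in> E" "(v, z') \<notin> E"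
    "separating_pair (f v) (f w) (f z) (f z')"
proof -
  obtain Z where Z: "Z \<in> P" "z \<in> Z"
    using block_cover[OF \<open>z \<in> V\<close>] by blast
  have "Z \<noteq> X"
  proof
    assume "Z = X"
    then show False
      using edge_in_block[OF X \<open>w \<in> X\<close>] Z(2) assms(5,7) by blast
  qed
  obtain z' where z': "z' \<in> Z" "(w, z') \<in> E" "(v, z') \<notin> E"
    using opposite_separator_in_block[OF X Z(1) assms(2,3) Z(2) assms(6,7)] .
  have dist: "dist_inf (f u) (f x) \<le> 1 \<longleftrightarrow> (x, u) \<in> E" if "x \<in> X" "u \<in> Z" for x u
    using edge_between_blocks_iff[OF X Z(1) \<open>Z \<noteq> X\<close>[symmetric] that] dist_inf_commute by metis
  have "separating_pair (f v) (f w) (f z) (f z')"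
    unfolding separating_pair_def
    using dist_inf_in_block[OF X assms(2,3)] dist_inf_in_block[OF Z(1,2) z'(1)]
      dist[OF assms(2) Z(2)] dist[OF assms(3) Z(2)] dist[OF assms(2) z'(1)] dist[OF assms(3) z'(1)]
      assms(6,7) z'(2,3) by blast
  with Z \<open>Z \<noteq> X\<close> z' show ?thesis
    using that by blast
qed

lemma separating_block:
  assumes X: "X \<in> P" and "v \<in> X" "w \<in> X" "v \<noteq> w"
  obtains Z z z' where "Z \<in> P" "Z \<noteq> X" "z \<in> Z" "z' \<in> Z" "(v, z) \<in> E" "(w, z) \<notin> E"
    "separating_pair (f v) (f w) (f z) (f z')"
proof -
  have "v \<in> V" "w \<in> V"
    using assms block_subset by auto
  have "v \<in> closed_nbhd V E w" "w \<in> closed_nbhd V E v"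
    using edge_in_block[OF X] assms(2-4) \<open>v \<in> V\<close> \<open>w \<in> V\<close> unfolding closed_nbhd_def by auto
  moreover have "closed_nbhd V E v \<noteq> closed_nbhd V E w"
    using twin_free \<open>v \<in> V\<close> \<open>w \<in> V\<close> \<open>v \<noteq> w\<close> unfolding twin_free_def by blast
  ultimately obtain z where "z \<in> V" "z \<noteq> v" "z \<noteq> w"
    "(v, z) \<in> E \<and> (w, z) \<notin> E \<or> (w, z) \<in> E \<and> (v, z) \<notin> E"
    unfolding closed_nbhd_def by blast
  then show ?thesis
  proof (elim disjE conjE)
    assume "(v, z) \<in> E" "(w, z) \<notin> E"
    then show ?thesis
      using separating_block_of_vertex[OF X assms(2,3) \<open>z \<in> V\<close> \<open>z \<noteq> w\<close>] that by metis
  next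
    assume "(w, z) \<in> E" "(v, z) \<notin> E"
    then show ?thesis
      using separating_block_of_vertex[OF X assms(3,2) \<open>z \<in> V\<close> \<open>z \<noteq> v\<close>] that
      by (metis separating_pair_swap)
  qed
qed

lemma coords_distinct:
  assumes "X \<in> P" "v \<in> X" "w \<in> X" "v \<noteq> w"
  shows "fst (f v) \<noteq> fst (f w) \<and> snd (f v) \<noteq> snd (f w)"
  using separating_block[OF assms] separating_pair_coords_distinct by metis

lemma nbhd_in_const_on_comparable:
  assumes b: "b \<in> {-1, 1}" and X: "X \<in> P" and "v \<in> X" "w \<in> X"
    and "fst (f v) < fst (f w)" "b * snd (f w) < b * snd (f v)"
  shows "\<exists>Z\<in>P. nbhd_in Z v \<noteq> nbhd_in Z w \<and>
    (\<forall>x\<in>X. \<forall>x'\<in>X. fst (f x) \<le> fst (f x') \<and> b * snd (f x) \<le> b * snd (f x') \<longrightarrow>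
      nbhd_in Z x = nbhd_in Z x')"
proof -
  have "v \<noteq> w"
    using assms(5) by auto
  then obtain Z z z' where Z: "Z \<in> P" "Z \<noteq> X" "z \<in> Z" "z' \<in> Z" "(v, z) \<in> E" "(w, z) \<notin> E"
    and sep: "separating_pair (f v) (f w) (f z) (f z')"
    using separating_block[OF X \<open>v \<in> X\<close> \<open>w \<in> X\<close>] by blast
  define g where "g x = reflect b (f x)" for x
  have dist_g: "dist_inf (g x) (g y) = dist_inf (f x) (f y)" for x y
    unfolding g_def using dist_inf_reflect[OF b] .
  have nbhd_in_iff: "u \<in> nbhd_in Z x \<longleftrightarrow> u \<in> Z \<and> dist_inf (g u) (g x) \<le> 1" if "x \<in> X" for u x
    using edge_between_blocks_iff[OF X Z(1) Z(2)[symmetric] that] dist_inf_commute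
    unfolding nbhd_in_def dist_g by auto
  have sep_g: "separating_pair (g v) (g w) (g z) (g z')"
    using sep separating_pair_reflect[OF b] unfolding g_def by simp
  have "nbhd_in Z x = nbhd_in Z x'"
    if x: "x \<in> X" "x' \<in> X" and le: "fst (f x) \<le> fst (f x')" "b * snd (f x) \<le> b * snd (f x')" for x x'
  proof -
    have "(\<forall>u. dist_inf u (g z) \<le> 1 \<and> dist_inf u (g z') \<le> 1 \<and> dist_inf u (g x) \<le> 1 \<longrightarrow> dist_inf u (g x') \<le> 1) \<or>
      (\<forall>u. dist_inf u (g z) \<le> 1 \<and> dist_inf u (g z') \<le> 1 \<and> dist_inf u (g x') \<le> 1 \<longrightarrow> dist_inf u (g x) \<le> 1)"
      using assms(5,6) le dist_inf_in_block[OF X x(1)] dist_inf_in_block[OF X x(2)] \<open>v \<in> X\<close> \<open>w \<in> X\<close>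
      by (intro separating_pair_nested[OF sep_g]) (simp_all add: dist_g, simp_all add: g_def)
    moreover have "dist_inf (g u) (g z) \<le> 1" "dist_inf (g u) (g z') \<le> 1" if "u \<in> Z" for u
      using dist_inf_in_block[OF Z(1) that] Z(3,4) by (simp_all add: dist_g)
    ultimately have "nbhd_in Z x \<subseteq> nbhd_in Z x' \<or> nbhd_in Z x' \<subseteq> nbhd_in Z x"
      unfolding subset_iff nbhd_in_iff[OF x(1)] nbhd_in_iff[OF x(2)] by blast
    then show ?thesis
      using nbhd_in_eq_of_subset[OF X Z(1) x] nbhd_in_eq_of_subset[OF X Z(1) x(2,1)] by auto
  qed
  moreover have "nbhd_in Z v \<noteq> nbhd_in Z w"
    using Z(3,5,6) unfolding nbhd_in_def by blast
  ultimately show ?thesis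
    using Z(1) by blast
qed

lemma not_oriented_imp_inversion:
  assumes "b \<in> {-1, 1}" "X \<in> P" "\<not> oriented f X b"
  shows "\<exists>v\<in>X. \<exists>w\<in>X. fst (f v) < fst (f w) \<and> b * snd (f w) < b * snd (f v)"
proof -
  obtain v w where vw: "v \<in> X" "w \<in> X" "\<not> (fst (f v) \<le> fst (f w) \<longleftrightarrow> b * snd (f v) \<le> b * snd (f w))"
    using assms unfolding oriented_def by blast
  then have "v \<noteq> w"
    by auto
  then have "fst (f v) \<noteq> fst (f w)" "b * snd (f v) \<noteq> b * snd (f w)"
    using coords_distinct[OF assms(2) vw(1,2)] assms(1) by auto
  then consider "fst (f v) < fst (f w)" "b * snd (f w) < b * snd (f v)"
    | "fst (f w) < fst (f v)" "b * snd (f v) < b * snd (f w)"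
    using vw(3) by linarith
  then show ?thesis
    using vw(1,2) by cases blast+
qed

lemma oriented_exists:
  assumes X: "X \<in> P"
  shows "oriented f X 1 \<or> oriented f X (-1)"
proof (rule ccontr)
  assume "\<not> ?thesis"
  then obtain v w p q where vw: "v \<in> X" "w \<in> X" "fst (f v) < fst (f w)" "1 * snd (f w) < 1 * snd (f v)"
    and pq: "p \<in> X" "q \<in> X" "fst (f p) < fst (f q)" "- 1 * snd (f q) < - 1 * snd (f p)"
    using not_oriented_imp_inversion[of 1 X] not_oriented_imp_inversion[of "-1" X] X by auto
  obtain Z1 where "nbhd_in Z1 v \<noteq> nbhd_in Z1 w"
    and Z1: "\<forall>x\<in>X. \<forall>x'\<in>X. fst (f x) \<le> fst (f x') \<and> 1 * snd (f x) \<le> 1 * snd (f x') \<longrightarrow>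
      nbhd_in Z1 x = nbhd_in Z1 x'"
    using nbhd_in_const_on_comparable[OF _ X vw] by blast
  obtain Z2 where "nbhd_in Z2 p \<noteq> nbhd_in Z2 q"
    and Z2: "\<forall>x\<in>X. \<forall>x'\<in>X. fst (f x) \<le> fst (f x') \<and> - 1 * snd (f x) \<le> - 1 * snd (f x') \<longrightarrow>
      nbhd_in Z2 x = nbhd_in Z2 x'"
    using nbhd_in_const_on_comparable[OF _ X pq] by blast
  define comparable where "comparable c x y \<longleftrightarrow>
    fst (f x) \<le> fst (f y) \<and> c * snd (f x) \<le> c * snd (f y) \<or>
    fst (f y) \<le> fst (f x) \<and> c * snd (f y) \<le> c * snd (f x)" for c :: real and x y
  have "(\<forall>x\<in>X. \<forall>y\<in>X. nbhd_in Z1 x = nbhd_in Z1 y) \<or> (\<forall>x\<in>X. \<forall>y\<in>X. nbhd_in Z2 x = nbhd_in Z2 y)"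
  proof (rule constant_on_one_of_covering_relations[where R = "comparable 1" and S = "comparable (-1)"])
    show "comparable 1 x y \<or> comparable (-1) x y" for x y
      unfolding comparable_def by linarith
    show "nbhd_in Z1 x = nbhd_in Z1 y" if "x \<in> X" "y \<in> X" "comparable 1 x y" for x y
      using Z1[rule_format, of x y] Z1[rule_format, of y x] that unfolding comparable_def by auto
    show "nbhd_in Z2 x = nbhd_in Z2 y" if "x \<in> X" "y \<in> X" "comparable (-1) x y" for x y
      using Z2[rule_format, of x y] Z2[rule_format, of y x] that unfolding comparable_def by auto
  qed
  then show False
    using \<open>nbhd_in Z1 v \<noteq> nbhd_in Z1 w\<close> \<open>nbhd_in Z2 p \<noteq> nbhd_in Z2 q\<close>
      \<open>v \<in> X\<close> \<open>w \<in> X\<close> \<open>p \<in> X\<close> \<open>q \<in> X\<close> by blast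
qed

lemma oriented_unique:
  assumes X: "X \<in> P" and "2 \<le> card X" "oriented f X b" "oriented f X c"
  shows "b = c"
proof -
  obtain v w where "v \<in> X" "w \<in> X" "v \<noteq> w"
    using \<open>2 \<le> card X\<close> card_le_Suc0_iff_eq[OF finite_block[OF X]] by force
  then have "fst (f v) \<noteq> fst (f w)"
    using coords_distinct[OF X] by blast
  then obtain v' w' where "v' \<in> X" "w' \<in> X" "fst (f v') < fst (f w')"
    using \<open>v \<in> X\<close> \<open>w \<in> X\<close> by (metis linorder_neqE)
  then have "b * snd (f v') < b * snd (f w')" "c * snd (f v') < c * snd (f w')"
    using assms(3,4) unfolding oriented_def by (meson not_le)+
  moreover have "b \<in> {-1, 1}" "c \<in> {-1, 1}"
    using assms(3,4) unfolding oriented_def by blast+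
  ultimately show "b = c"
    by auto
qed

lemma ori_oriented:
  assumes X: "X \<in> P"
  shows "oriented f X (ori f X)"
proof (cases "card X = 1")
  case True
  then obtain x where "X = {x}"
    by (rule card_1_singletonE)
  then show ?thesis
    using True by (simp add: ori_def oriented_def)
next
  case False
  then have "2 \<le> card X"
    using card_block_pos[OF X] by linarith
  then have "\<exists>!b. oriented f X b"
    using oriented_exists[OF X] oriented_unique[OF X] by blast
  then show ?thesis
    using False unfolding ori_def by (simp add: theI')
qed

lemma ori_sign: "X \<in> P \<Longrightarrow> ori f X \<in> {-1, 1}"
  using ori_oriented unfolding oriented_def by blast

lemma nbhd_in_nested_of_ori_ne:
  assumes X: "X \<in> P" and Y: "Y \<in> P" and ne: "ori f X \<noteq> ori f Y" and "x \<in> X" "x' \<in> X"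
  shows "nbhd_in Y x \<subseteq> nbhd_in Y x' \<or> nbhd_in Y x' \<subseteq> nbhd_in Y x"
proof (rule ccontr)
  assume "\<not> ?thesis"
  then obtain y y' where y: "y \<in> Y" "(x, y) \<in> E" "(x', y) \<notin> E" and y': "y' \<in> Y" "(x', y') \<in> E" "(x, y') \<notin> E"
    unfolding nbhd_in_def by blast
  define b where "b = ori f X"
  have "X \<noteq> Y"
    using ne by blast
  have dist: "(u, v) \<in> E \<longleftrightarrow> dist_inf (f u) (f v) \<le> 1" if "u \<in> X" "v \<in> Y" for u v
    using edge_between_blocks_iff[OF X Y \<open>X \<noteq> Y\<close> that] .
  have "b \<in> {-1, 1}" "ori f Y = - b"
    using ori_sign[OF X] ori_sign[OF Y] ne unfolding b_def by auto
  moreover have "oriented f X b" "oriented f Y (- b)"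
    using ori_oriented[OF X] ori_oriented[OF Y] \<open>ori f Y = - b\<close> unfolding b_def by simp_all
  then have "fst (f x) \<le> fst (f x') \<longleftrightarrow> b * snd (f x) \<le> b * snd (f x')"
    "fst (f x') \<le> fst (f x) \<longleftrightarrow> b * snd (f x') \<le> b * snd (f x)"
    "fst (f y) \<le> fst (f y') \<longleftrightarrow> - b * snd (f y) \<le> - b * snd (f y')"
    "fst (f y') \<le> fst (f y) \<longleftrightarrow> - b * snd (f y') \<le> - b * snd (f y)"
    using \<open>x \<in> X\<close> \<open>x' \<in> X\<close> \<open>y \<in> Y\<close> \<open>y' \<in> Y\<close> unfolding oriented_def by blast+
  ultimately have "dist_inf (f x) (f y') \<le> 1 \<or> dist_inf (f x') (f y) \<le> 1"
    using dist_inf_in_block[OF X \<open>x \<in> X\<close> \<open>x' \<in> X\<close>] dist_inf_in_block[OF Y \<open>y \<in> Y\<close> \<open>y' \<in> Y\<close>]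
      dist[OF \<open>x \<in> X\<close> \<open>y \<in> Y\<close>] dist[OF \<open>x' \<in> X\<close> \<open>y' \<in> Y\<close>] y(2) y'(2)
    by (intro opposite_orientations_no_induced_matching[of b]) simp_all
  then show False
    using dist \<open>x \<in> X\<close> \<open>x' \<in> X\<close> y y' by blast
qed

lemma all_or_nothing_of_nbhd_in_eq:
  assumes X: "X \<in> P" and Y: "Y \<in> P" and eq: "\<And>x x'. x \<in> X \<Longrightarrow> x' \<in> X \<Longrightarrow> nbhd_in Y x = nbhd_in Y x'"
  shows "(\<forall>x\<in>X. \<forall>y\<in>Y. (x, y) \<in> E) \<or> (\<forall>x\<in>X. \<forall>y\<in>Y. (x, y) \<notin> E)"
proof (rule ccontr)
  assume "\<not> ?thesis"
  then obtain x1 y1 x2 y2 where "x1 \<in> X" "y1 \<in> Y" "(x1, y1) \<in> E" "x2 \<in> X" "y2 \<in> Y" "(x2, y2) \<notin> E"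
    by blast
  have "nbhd_in X y1 = X"
    using eq[OF \<open>x1 \<in> X\<close>] \<open>y1 \<in> Y\<close> \<open>(x1, y1) \<in> E\<close> edge_sym unfolding nbhd_in_def by blast
  moreover have "nbhd_in X y2 = {}"
    using eq[OF \<open>x2 \<in> X\<close>] \<open>y2 \<in> Y\<close> \<open>(x2, y2) \<notin> E\<close> edge_sym unfolding nbhd_in_def by blast
  moreover have "card (nbhd_in X y1) = card (nbhd_in X y2)"
    using card_nbhd_in_eq[OF Y X \<open>y1 \<in> Y\<close> \<open>y2 \<in> Y\<close>] .
  ultimately show False
    using card_block_pos[OF X] by simp
qed

lemma all_or_nothing_of_ori_ne:
  assumes X: "X \<in> P" and Y: "Y \<in> P" and "ori f X \<noteq> ori f Y"
  shows "(\<forall>x\<in>X. \<forall>y\<in>Y. (x, y) \<in> E) \<or> (\<forall>x\<in>X. \<forall>y\<in>Y. (x, y) \<notin> E)"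
proof (rule all_or_nothing_of_nbhd_in_eq[OF X Y])
  fix x x' assume "x \<in> X" "x' \<in> X"
  then show "nbhd_in Y x = nbhd_in Y x'"
    using nbhd_in_nested_of_ori_ne[OF assms \<open>x \<in> X\<close> \<open>x' \<in> X\<close>] nbhd_in_eq_of_subset[OF X Y]
    by blast
qed

lemma edge_between_blocks_iff_shifted_le:
  assumes "X \<in> P" "Y \<in> P" "X \<noteq> Y" "x \<in> X" "y \<in> Y" "b \<in> {-1, 1}"
  shows "(x, y) \<in> E \<longleftrightarrow> shifted_le b (f x) (f y) \<and> shifted_le b (f y) (f x)"
  using edge_between_blocks_iff[OF assms(1-5)] dist_inf_le_1_iff_shifted_le[OF assms(6)] by simp

lemma card_edges_between:
  assumes X: "X \<in> P" and Y: "Y \<in> P" and "x \<in> X"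
  shows "card {(x, y). x \<in> X \<and> y \<in> Y \<and> (x, y) \<in> E} = card X * card (nbhd_in Y x)"
proof -
  have "{(x, y). x \<in> X \<and> y \<in> Y \<and> (x, y) \<in> E} = Sigma X (nbhd_in Y)"
    unfolding nbhd_in_def by auto
  then have "card {(x, y). x \<in> X \<and> y \<in> Y \<and> (x, y) \<in> E} = (\<Sum>x'\<in>X. card (nbhd_in Y x'))"
    using finite_block[OF X] finite_block[OF Y] by (simp add: nbhd_in_def)
  also have "\<dots> = (\<Sum>x'\<in>X. card (nbhd_in Y x))"
    using card_nbhd_in_eq[OF X Y _ \<open>x \<in> X\<close>] by simp
  finally show ?thesis
    by simp
qed

lemma card_edges_between_swap:
  "card {(x, y). x \<in> X \<and> y \<in> Y \<and> (x, y) \<in> E} = card {(y, x). y \<in> Y \<and> x \<in> X \<and> (y, x) \<in> E}"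
proof -
  have "(x, y) \<in> E \<longleftrightarrow> (y, x) \<in> E" for x y
    using edge_sym by blast
  then have "{(x, y). x \<in> X \<and> y \<in> Y \<and> (x, y) \<in> E} = prod.swap ` {(y, x). y \<in> Y \<and> x \<in> X \<and> (y, x) \<in> E}"
    by (auto simp: image_iff)
  then show ?thesis
    by (simp add: card_image)
qed

lemma sorted_enumeration_mono:
  assumes X: "X \<in> P" and xs: "bij_betw xs {1..card X} X"
    and sorted: "\<forall>i. 1 \<le> i \<and> i < card X \<longrightarrow> fst (f (xs i)) \<le> fst (f (xs (i + 1)))"
    and "1 \<le> i" "i \<le> i'" "i' \<le> card X"
  shows "fst (f (xs i)) \<le> fst (f (xs i'))" "ori f X * snd (f (xs i)) \<le> ori f X * snd (f (xs i'))"
proof -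
  show le: "fst (f (xs i)) \<le> fst (f (xs i'))"
    by (rule lift_Suc_mono_le_interval[where g = "\<lambda>i. fst (f (xs i))" and n = "card X"])
      (use sorted assms(4-) in simp_all)
  have "xs i \<in> X" "xs i' \<in> X"
    using bij_betw_apply[OF xs] assms(4-) by auto
  with le show "ori f X * snd (f (xs i)) \<le> ori f X * snd (f (xs i'))"
    using ori_oriented[OF X] unfolding oriented_def by blast
qed

lemma staircase_of_sorted_enumerations:
  assumes X: "X \<in> P" and Y: "Y \<in> P" and "X \<noteq> Y" and "ori f X = ori f Y"
    and xs: "bij_betw xs {1..card X} X"
    and xs_sorted: "\<forall>i. 1 \<le> i \<and> i < card X \<longrightarrow> fst (f (xs i)) \<le> fst (f (xs (i + 1)))"
    and ys: "bij_betw ys {1..card Y} Y"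
    and ys_sorted: "\<forall>j. 1 \<le> j \<and> j < card Y \<longrightarrow> fst (f (ys j)) \<le> fst (f (ys (j + 1)))"
    and "1 \<le> d" "1 \<le> e"
    and deg_X: "\<And>x. x \<in> X \<Longrightarrow> card (nbhd_in Y x) = d"
    and deg_Y: "\<And>y. y \<in> Y \<Longrightarrow> card (nbhd_in X y) = e"
  defines "b \<equiv> ori f X"
  shows "biregular_staircase (card X) (card Y) d e
    (\<lambda>i j. shifted_le b (f (xs i)) (f (ys j))) (\<lambda>i j. shifted_le b (f (ys j)) (f (xs i)))"
proof
  note mono_X = sorted_enumeration_mono[OF X xs xs_sorted, folded b_def]
  note mono_Y = sorted_enumeration_mono[OF Y ys ys_sorted, folded \<open>ori f X = ori f Y\<close> b_def]
  show "1 \<le> d" "1 \<le> e"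
    by fact+
  show "shifted_le b (f (xs i')) (f (ys j'))"
    if "1 \<le> i'" "i' \<le> i" "i \<le> card X" "1 \<le> j" "j \<le> j'" "j' \<le> card Y"
      "shifted_le b (f (xs i)) (f (ys j))" for i i' j j'
    using mono_X[of i' i] mono_Y[of j j'] that unfolding shifted_le_def by linarith
  show "shifted_le b (f (ys j')) (f (xs i'))"
    if "1 \<le> i" "i \<le> i'" "i' \<le> card X" "1 \<le> j'" "j' \<le> j" "j \<le> card Y"
      "shifted_le b (f (ys j)) (f (xs i))" for i i' j j'
    using mono_X[of i i'] mono_Y[of j' j] that unfolding shifted_le_def by linarith
  have edge_iff: "(xs i, ys j) \<in> E \<longleftrightarrow> shifted_le b (f (xs i)) (f (ys j)) \<and> shifted_le b (f (ys j)) (f (xs i))"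
    if "i \<in> {1..card X}" "j \<in> {1..card Y}" for i j
    using edge_between_blocks_iff_shifted_le[OF X Y \<open>X \<noteq> Y\<close> bij_betw_apply[OF xs that(1)]
        bij_betw_apply[OF ys that(2)] ori_sign[OF X]]
    unfolding b_def .
  show "card {j \<in> {1..card Y}. shifted_le b (f (xs i)) (f (ys j)) \<and> shifted_le b (f (ys j)) (f (xs i))} = d"
    if "i \<in> {1..card X}" for i
  proof -
    have "card {j \<in> {1..card Y}. (xs i, ys j) \<in> E} = card (nbhd_in Y (xs i))"
      unfolding nbhd_in_def by (rule card_filter_bij_betw[OF ys])
    then show ?thesis
      using edge_iff[OF that] deg_X[OF bij_betw_apply[OF xs that]] by (simp cong: conj_cong)
  qed
  show "card {i \<in> {1..card X}. shifted_le b (f (xs i)) (f (ys j)) \<and> shifted_le b (f (ys j)) (f (xs i))} = e"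
    if "j \<in> {1..card Y}" for j
  proof -
    have "{i \<in> {1..card X}. (xs i, ys j) \<in> E} = {i \<in> {1..card X}. (ys j, xs i) \<in> E}"
      using edge_sym by blast
    also have "card \<dots> = card (nbhd_in X (ys j))"
      unfolding nbhd_in_def by (rule card_filter_bij_betw[OF xs])
    finally show ?thesis
      using edge_iff[OF _ that] deg_Y[OF bij_betw_apply[OF ys that]] by (simp cong: conj_cong)
  qed
qed

lemma edge_iff_ceiling_eq:
  assumes X: "X \<in> P" and Y: "Y \<in> P" and "X \<noteq> Y" and "ori f X = ori f Y"
    and K_pos: "1 \<le> card {(x, y). x \<in> X \<and> y \<in> Y \<and> (x, y) \<in> E}"
    and xs: "bij_betw xs {1..card X} X"
    and xs_sorted: "\<forall>i. 1 \<le> i \<and> i < card X \<longrightarrow> fst (f (xs i)) \<le> fst (f (xs (i + 1)))"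
    and ys: "bij_betw ys {1..card Y} Y"
    and ys_sorted: "\<forall>j. 1 \<le> j \<and> j < card Y \<longrightarrow> fst (f (ys j)) \<le> fst (f (ys (j + 1)))"
    and i: "i \<in> {1..card X}" and j: "j \<in> {1..card Y}"
  defines "K \<equiv> card {(x, y). x \<in> X \<and> y \<in> Y \<and> (x, y) \<in> E}"
  shows "(xs i, ys j) \<in> E \<longleftrightarrow>
    \<lceil>real i * real (card Y) / real K\<rceil> = \<lceil>real j * real (card X) / real K\<rceil>"
proof -
  obtain x0 y0 where "x0 \<in> X" "y0 \<in> Y"
    using block_nonempty[OF X] block_nonempty[OF Y] by blast
  define d e where "d = card (nbhd_in Y x0)" and "e = card (nbhd_in X y0)"
  have deg_X: "card (nbhd_in Y x) = d" if "x \<in> X" for x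
    unfolding d_def using card_nbhd_in_eq[OF X Y that \<open>x0 \<in> X\<close>] .
  have deg_Y: "card (nbhd_in X y) = e" if "y \<in> Y" for y
    unfolding e_def using card_nbhd_in_eq[OF Y X that \<open>y0 \<in> Y\<close>] .
  have K_X: "K = card X * d"
    unfolding K_def d_def by (rule card_edges_between[OF X Y \<open>x0 \<in> X\<close>])
  have K_Y: "K = card Y * e"
    unfolding K_def e_def
    using card_edges_between_swap[of X Y] card_edges_between[OF Y X \<open>y0 \<in> Y\<close>] by simp
  have "1 \<le> K"
    using K_pos unfolding K_def .
  have "1 \<le> d"
    using \<open>1 \<le> K\<close> unfolding K_X by (simp add: Suc_le_eq)
  have "1 \<le> e"
    using \<open>1 \<le> K\<close> unfolding K_Y by (simp add: Suc_le_eq)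
  define b where "b = ori f X"
  have "biregular_staircase (card X) (card Y) d e
      (\<lambda>i j. shifted_le b (f (xs i)) (f (ys j))) (\<lambda>i j. shifted_le b (f (ys j)) (f (xs i)))"
    unfolding b_def
    by (rule staircase_of_sorted_enumerations[OF X Y assms(3,4) xs xs_sorted ys ys_sorted
        \<open>1 \<le> d\<close> \<open>1 \<le> e\<close> deg_X deg_Y])
  then have "(xs i, ys j) \<in> E \<longleftrightarrow> (i - 1) div e = (j - 1) div d"
    using edge_between_blocks_iff_shifted_le[OF X Y \<open>X \<noteq> Y\<close> bij_betw_apply[OF xs i]
        bij_betw_apply[OF ys j] ori_sign[OF X]] biregular_staircase_blocks[OF _ i j]
    unfolding b_def by simp
  also have "\<dots> \<longleftrightarrow> \<lceil>real i / real e\<rceil> = \<lceil>real j / real d\<rceil>"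
    using ceiling_of_nat_divide[of i e] ceiling_of_nat_divide[of j d] i j \<open>1 \<le> d\<close> \<open>1 \<le> e\<close> by simp
  also have "real i / real e = real i * real (card Y) / real K"
    using K_Y card_block_pos[OF Y] by (simp add: field_simps)
  also have "real j / real d = real j * real (card X) / real K"
    using K_X card_block_pos[OF X] by (simp add: field_simps)
  finally show ?thesis .
qed

end

theorem mainTheorem14:
  fixes V :: "'v set" and E :: "('v \<times> 'v) set" and P :: "'v set set"
    and f :: "'v \<Rightarrow> real \<times> real"
  assumes graph: "fin_graph V E"
    and usg: "unit_square_graph V E"
    and tf: "twin_free V E"
    and cs: "clique_stable V E P"
    and rf: "realization V E f"
  shows "(\<forall>X\<in>P. (\<exists>b. oriented f X b) \<and> (card X \<ge> 2 \<longrightarrow> (\<exists>!b. oriented f X b)))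
    \<and> (\<forall>X\<in>P. \<forall>Y\<in>P. ori f X \<noteq> ori f Y \<longrightarrow>
          (\<forall>x\<in>X. \<forall>y\<in>Y. (x, y) \<in> E) \<or> (\<forall>x\<in>X. \<forall>y\<in>Y. (x, y) \<notin> E))
    \<and> (\<forall>X\<in>P. \<forall>Y\<in>P. \<forall>xs ys :: nat \<Rightarrow> 'v.
          X \<noteq> Y \<longrightarrow> ori f X = ori f Y \<longrightarrow>
          card {(x, y). x \<in> X \<and> y \<in> Y \<and> (x, y) \<in> E} \<ge> 1 \<longrightarrow>
          bij_betw xs {1..card X} X \<longrightarrow>
          (\<forall>i. 1 \<le> i \<and> i < card X \<longrightarrow> fst (f (xs i)) \<le> fst (f (xs (i + 1)))) \<longrightarrow>
          bij_betw ys {1..card Y} Y \<longrightarrow>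
          (\<forall>j. 1 \<le> j \<and> j < card Y \<longrightarrow> fst (f (ys j)) \<le> fst (f (ys (j + 1)))) \<longrightarrow>
          (\<forall>i\<in>{1..card X}. \<forall>j\<in>{1..card Y}.
             (xs i, ys j) \<in> E \<longleftrightarrow>
             \<lceil>real i * real (card Y) / real (card {(x, y). x \<in> X \<and> y \<in> Y \<and> (x, y) \<in> E})\<rceil>
             = \<lceil>real j * real (card X) / real (card {(x, y). x \<in> X \<and> y \<in> Y \<and> (x, y) \<in> E})\<rceil>))"
proof -
  interpret clique_stable_realization V E P f
    using graph tf cs rf by unfold_locales
  show ?thesis
  proof (intro conjI ballI allI impI)
    fix X assume X: "X \<in> P"
    show "\<exists>b. oriented f X b"
      using oriented_exists[OF X] by blast
    show "\<exists>!b. oriented f X b" if "2 \<le> card X"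
      using oriented_exists[OF X] oriented_unique[OF X that] by blast
  next
    show "(\<forall>x\<in>X. \<forall>y\<in>Y. (x, y) \<in> E) \<or> (\<forall>x\<in>X. \<forall>y\<in>Y. (x, y) \<notin> E)"
      if "X \<in> P" "Y \<in> P" "ori f X \<noteq> ori f Y" for X Y
      using all_or_nothing_of_ori_ne that .
  qed (rule edge_iff_ceiling_eq)
qed

end
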